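(* If the formal deformations $(\{\cdot,\cdot\}^{[a,b,c]}_n)_{n\ge0}$ and $(\{\cdot,\cdot\}^{[a',b',c']}_n)_{n\ge0}$ of $\widetilde J$ are modular-isomorphic, then $c=c'$ and there exists $\xi\in\mathbb{C}^*$ such that $a'=\xi a$ and $b'=\xi^{-1}b$.
   Context: Let $\widetilde J=\mathbb{C}[E_4,E_6,A,B]$ be the polynomial algebra in four algebraically independent variables, bigraded by weight and index, where $E_4$ has weight $4$ and index $0$, $E_6$ has weight $6$ and index $0$, $A$ has weight $-2$ and index $1$, $B$ has weight $0$ and index $1$; $\widetilde J_{k,p}$ denotes the homogeneous component of weight $k$ and index $p$. For $(a,b)\in\mathbb{C}^2$, $S_{a,b}$ is the derivation of $\widetilde J$ with $S_{a,b}(E_4)=-\tfrac13E_6$, $S_{a,b}(E_6)=-\tfrac12E_4^2$, $S_{a,b}(A)=aB$, $S_{a,b}(B)=bE_4A$. For $c\in\mathbb{C}$ and $n\ge0$, $\{\cdot,\cdot\}^{[a,b,c]}_n$ is the bilinear map on $\widetilde J$ defined on homogeneous $f\in\widetilde J_{k,p}$, $g\in\widetilde J_{\ell,q}$ by $\{f,g\}^{[a,b,c]}_n=\sum_{r=0}^n(-1)^r\binom{k+cp+n-1}{n-r}\binom{\ell+cq+n-1}{r}S_{a,b}^r(f)\,S_{a,b}^{n-r}(g)$ (complex binomial coefficients). Two such formal deformations $(\{\cdot,\cdot\}^{[a,b,c]}_n)_n$ and $(\{\cdot,\cdot\}^{[a',b',c']}_n)_n$ are modular-isomorphic if there is a $\mathbb{C}$-linear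 bijection $\phi:\widetilde J\to\widetilde J$ mapping each $\widetilde J_{k,p}$ into $\widetilde J_{k,p}$ and such that $\phi(\{f,g\}^{[a,b,c]}_j)=\{\phi(f),\phi(g)\}^{[a',b',c']}_j$ for all $j\ge0$ and $f,g\in\widetilde J$. *)

theory Defs
  imports Complex_Main "HOL-Library.Poly_Mapping"
begin

text \<open>The polynomial algebra C[E4,E6,A,B]: finitely supported maps from
  monomials (exponent vectors over the four generators) to complex coefficients,
  with the convolution product of Poly_Mapping.\<close>

datatype gen = E4 | E6 | GA | GB

type_synonym monom = "gen \<Rightarrow>\<^sub>0 nat"
type_synonym J = "monom \<Rightarrow>\<^sub>0 complex"

definition var :: "gen \<Rightarrow> J" where
  "var v = Poly_Mapping.single (Poly_Mapping.single v 1) 1"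

definition const :: "complex \<Rightarrow> J" where
  "const c = Poly_Mapping.single 0 c"

definition mweight :: "monom \<Rightarrow> int" where
  "mweight m = 4 * int (Poly_Mapping.lookup m E4) + 6 * int (Poly_Mapping.lookup m E6) - 2 * int (Poly_Mapping.lookup m GA)"

definition mindex :: "monom \<Rightarrow> int" where
  "mindex m = int (Poly_Mapping.lookup m GA) + int (Poly_Mapping.lookup m GB)"

definition Jcomp :: "int \<Rightarrow> int \<Rightarrow> J set" where
  "Jcomp k p = {f. \<forall>m \<in> Poly_Mapping.keys f. mweight m = k \<and> mindex m = p}"

definition hpart :: "int \<Rightarrow> int \<Rightarrow> J \<Rightarrow> J" where
  "hpart k p f = (\<Sum>m \<in> {m \<in> Poly_Mapping.keys f. mweight m = k \<and> mindex m = p}.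
                    Poly_Mapping.single m (Poly_Mapping.lookup f m))"

definition bidegs :: "J \<Rightarrow> (int \<times> int) set" where
  "bidegs f = (\<lambda>m. (mweight m, mindex m)) ` Poly_Mapping.keys f"

definition Sgen :: "complex \<Rightarrow> complex \<Rightarrow> gen \<Rightarrow> J" where
  "Sgen a b v = (case v of
      E4 \<Rightarrow> const (-1/3) * var E6
    | E6 \<Rightarrow> const (-1/2) * var E4 * var E4
    | GA \<Rightarrow> const a * var GB
    | GB \<Rightarrow> const b * var E4 * var GA)"

definition Smon :: "complex \<Rightarrow> complex \<Rightarrow> monom \<Rightarrow> J" where
  "Smon a b m = (\<Sum>v \<in> {E4, E6, GA, GB}.
      const (of_nat (Poly_Mapping.lookup m v)) * Poly_Mapping.single (m - Poly_Mapping.single v 1) 1 * Sgen a b v)"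

definition S :: "complex \<Rightarrow> complex \<Rightarrow> J \<Rightarrow> J" where
  "S a b f = (\<Sum>m \<in> Poly_Mapping.keys f. const (Poly_Mapping.lookup f m) * Smon a b m)"

text \<open>the bracket on homogeneous elements f in J_{k,p}, g in J_{l,q}\<close>
definition hbracket :: "complex \<Rightarrow> complex \<Rightarrow> complex \<Rightarrow> nat \<Rightarrow>
    int \<Rightarrow> int \<Rightarrow> J \<Rightarrow> int \<Rightarrow> int \<Rightarrow> J \<Rightarrow> J" where
  "hbracket a b c n k p f l q g =
     (\<Sum>r\<le>n. const ((-1) ^ r
        * ((of_int k + c * of_int p + of_nat n - 1) gchoose (n - r))
        * ((of_int l + c * of_int q + of_nat n - 1) gchoose r))
        * (S a b ^^ r) f * (S a b ^^ (n - r)) g)"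

definition bracket :: "complex \<Rightarrow> complex \<Rightarrow> complex \<Rightarrow> nat \<Rightarrow> J \<Rightarrow> J \<Rightarrow> J" where
  "bracket a b c n f g =
     (\<Sum>(k,p) \<in> bidegs f. \<Sum>(l,q) \<in> bidegs g.
        hbracket a b c n k p (hpart k p f) l q (hpart l q g))"

definition modular_isomorphic ::
    "complex \<Rightarrow> complex \<Rightarrow> complex \<Rightarrow> complex \<Rightarrow> complex \<Rightarrow> complex \<Rightarrow> bool" where
  "modular_isomorphic a b c a' b' c' \<longleftrightarrow>
     (\<exists>\<phi> :: J \<Rightarrow> J.
        (\<forall>x y. \<phi> (x + y) = \<phi> x + \<phi> y) \<and>
        (\<forall>s x. \<phi> (const s * x) = const s * \<phi> x) \<and>
        bij \<phi> \<and>
        (\<forall>k p. \<phi> ` Jcomp k p \<subseteq> Jcomp k p) \<and>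
        (\<forall>j f g. \<phi> (bracket a b c j f g) = bracket a' b' c' j (\<phi> f) (\<phi> g)))"

end

theory Submission
  imports Defs
begin

text \<open>A modular isomorphism \<phi> preserves bidegrees, and the bidegree of each generator
  E4, E6, A, B contains no other monomial, so \<phi> rescales every generator by a nonzero
  factor. The zeroth bracket is the product, hence \<phi> is multiplicative and acts
  diagonally on monomials. Comparing coefficients in the first brackets of E4 with E6,
  A and B then forces the factors of E4 and E6 to be 1, c = c', and
  a' = \<xi> a, b' = \<xi>\<inverse> b for \<xi> the ratio of the factors of B and A.\<close>

abbreviation deg1 :: "gen \<Rightarrow> monom" where
  "deg1 v \<equiv> Poly_Mapping.single v 1"

lemma monom_eq_iff:
  "(m :: monom) = m' \<longleftrightarrow> (\<forall>v \<in> {E4, E6, GA, GB}. Poly_Mapping.lookup m v = Poly_Mapping.lookup m' v)"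
proof
  assume eq: "\<forall>v \<in> {E4, E6, GA, GB}. Poly_Mapping.lookup m v = Poly_Mapping.lookup m' v"
  show "m = m'"
  proof (rule poly_mapping_eqI)
    fix v
    show "Poly_Mapping.lookup m v = Poly_Mapping.lookup m' v"
      using eq by (cases v) auto
  qed
qed simp

lemma const_mult: "const (s * t) = const s * const t"
  by (simp add: const_def mult_single)

lemma const_1: "const 1 = 1"
  by (simp add: const_def)

lemma const_0: "const 0 = 0"
  by (simp add: const_def)

lemma const_uminus: "const (- s) = - const s"
  by (simp add: const_def single_uminus)

lemma const_add: "const (s + t) = const s + const t"
  by (simp add: const_def single_add)

lemma const_diff: "const (s - t) = const s - const t"
  by (simp add: const_def single_diff)

lemma const_mult_single: "const s * Poly_Mapping.single m t = Poly_Mapping.single m (s * t)"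
  by (simp add: const_def mult_single)

lemma const_mult_var: "const s * var v = Poly_Mapping.single (deg1 v) s"
  by (simp add: var_def const_mult_single)

lemma var_Jcomp: "var v \<in> Jcomp (mweight (deg1 v)) (mindex (deg1 v))"
  by (simp add: var_def Jcomp_def)

lemma monom_eq_deg1_if_same_bidegree:
  assumes "mweight m = mweight (deg1 v)" "mindex m = mindex (deg1 v)"
  shows "m = deg1 v"
  using assms by (cases v; auto simp: mweight_def mindex_def monom_eq_iff lookup_single when_def; presburger)

lemma Jcomp_deg1_eq:
  assumes "f \<in> Jcomp (mweight (deg1 v)) (mindex (deg1 v))"
  shows "f = const (Poly_Mapping.lookup f (deg1 v)) * var v"
proof (rule poly_mapping_eqI)
  fix m
  have "m \<in> Poly_Mapping.keys f \<Longrightarrow> m = deg1 v"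
    using assms monom_eq_deg1_if_same_bidegree unfolding Jcomp_def by blast
  then show "Poly_Mapping.lookup f m = Poly_Mapping.lookup (const (Poly_Mapping.lookup f (deg1 v)) * var v) m"
    by (auto simp: const_mult_var lookup_single when_def in_keys_iff)
qed

lemma sum_single_lookup:
  "(\<Sum>m\<in>Poly_Mapping.keys f. Poly_Mapping.single m (Poly_Mapping.lookup f m)) = f"
  by (rule poly_mapping_eqI) (simp add: lookup_sum lookup_single when_def in_keys_iff)

lemma sum_hpart_bidegs: "(\<Sum>(k, p)\<in>bidegs f. hpart k p f) = f"
proof -
  have "(\<Sum>(k, p)\<in>bidegs f. hpart k p f)
      = (\<Sum>d\<in>bidegs f. \<Sum>m\<in>{m \<in> Poly_Mapping.keys f. (mweight m, mindex m) = d}.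
            Poly_Mapping.single m (Poly_Mapping.lookup f m))"
    by (rule sum.cong) (auto simp: hpart_def)
  also have "\<dots> = f"
    unfolding bidegs_def by (subst sum.group) (auto simp: sum_single_lookup)
  finally show ?thesis .
qed

lemma bracket_0: "bracket a b c 0 f g = f * g"
proof -
  have "bracket a b c 0 f g = (\<Sum>(k, p)\<in>bidegs f. \<Sum>(l, q)\<in>bidegs g. hpart k p f * hpart l q g)"
    by (simp add: bracket_def hbracket_def const_def)
  also have "\<dots> = (\<Sum>(k, p)\<in>bidegs f. hpart k p f) * (\<Sum>(l, q)\<in>bidegs g. hpart l q g)"
    by (simp add: sum_product case_prod_beta)
  finally show ?thesis by (simp add: sum_hpart_bidegs)
qed

lemma bracket_single:
  assumes "s \<noteq> 0" "t \<noteq> 0"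
  shows "bracket a b c n (Poly_Mapping.single m s) (Poly_Mapping.single m' t)
    = hbracket a b c n (mweight m) (mindex m) (Poly_Mapping.single m s)
        (mweight m') (mindex m') (Poly_Mapping.single m' t)"
proof -
  have "hpart (mweight m) (mindex m) (Poly_Mapping.single m s) = Poly_Mapping.single m s"
    if "s \<noteq> 0" for m s
  proof -
    have "{x \<in> Poly_Mapping.keys (Poly_Mapping.single m s). mweight x = mweight m \<and> mindex x = mindex m} = {m}"
      using that by auto
    then show ?thesis by (simp add: hpart_def)
  qed
  with assms show ?thesis
    by (simp add: bracket_def bidegs_def)
qed

lemma S_single: "S a b (Poly_Mapping.single m t) = const t * Smon a b m"
  by (simp add: S_def const_0)

lemma Smon_deg1: "Smon a b (deg1 v) = Sgen a b v"
  unfolding Smon_def by (cases v) (simp_all add: lookup_single const_0 const_1)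

lemma S_const_mult_var: "S a b (const s * var v) = const s * Sgen a b v"
  unfolding const_mult_var S_single by (simp add: Smon_deg1 del: One_nat_def)

definition twisted_weight :: "complex \<Rightarrow> gen \<Rightarrow> complex" where
  "twisted_weight c v = of_int (mweight (deg1 v)) + c * of_int (mindex (deg1 v))"

lemma twisted_weight_gen:
  "twisted_weight c E4 = 4" "twisted_weight c E6 = 6"
  "twisted_weight c GA = c - 2" "twisted_weight c GB = c"
  by (simp_all add: twisted_weight_def mweight_def mindex_def lookup_single)

lemma hbracket_1:
  "hbracket a b c 1 k p f l q g
    = const (of_int k + c * of_int p) * f * S a b g - const (of_int l + c * of_int q) * S a b f * g"
proof -
  have "{..1 :: nat} = {0, 1}" "S a b ^^ 1 = S a b" by auto
  then show ?thesis
    by (simp add: hbracket_def const_add const_diff const_uminus algebra_simps del: One_nat_def)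
qed

lemma bracket_1_var:
  assumes "s \<noteq> 0" "t \<noteq> 0"
  shows "bracket a b c 1 (const s * var v) (const t * var w)
    = const (s * t) * (const (twisted_weight c v) * var v * Sgen a b w
                       - const (twisted_weight c w) * Sgen a b v * var w)"
proof -
  have "bracket a b c 1 (const s * var v) (const t * var w)
      = hbracket a b c 1 (mweight (deg1 v)) (mindex (deg1 v)) (const s * var v)
          (mweight (deg1 w)) (mindex (deg1 w)) (const t * var w)"
    unfolding const_mult_var using assms by (rule bracket_single)
  also have "\<dots> = const (s * t) * (const (twisted_weight c v) * var v * Sgen a b w
                       - const (twisted_weight c w) * Sgen a b v * var w)"
    unfolding hbracket_1 twisted_weight_def[symmetric] S_const_mult_var
    by (simp add: algebra_simps const_mult)
  finally show ?thesis .
qed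

lemma bracket_1_var_var:
  "bracket a b c 1 (var v) (var w)
    = const (twisted_weight c v) * var v * Sgen a b w - const (twisted_weight c w) * Sgen a b v * var w"
  using bracket_1_var[OF one_neq_zero one_neq_zero, of a b c v w] by (simp add: const_1)

lemma bracket_1_E4_E6:
  "bracket a b c 1 (var E4) (var E6) = const 2 * (var E6 * var E6) - const 2 * (var E4 * var E4 * var E4)"
  unfolding bracket_1_var_var
  by (simp add: twisted_weight_gen Sgen_def const_def var_def mult_single add_ac single_uminus del: single_numeral)

lemma bracket_1_E4_A:
  "bracket a b c 1 (var E4) (var GA)
    = const (4 * a) * (var E4 * var GB) + const ((c - 2) / 3) * (var E6 * var GA)"
  unfolding bracket_1_var_var
  by (simp add: twisted_weight_gen Sgen_def const_def var_def mult_single add_ac single_uminus del: single_numeral)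

lemma bracket_1_E4_B:
  "bracket a b c 1 (var E4) (var GB)
    = const (4 * b) * (var E4 * var E4 * var GA) + const (c / 3) * (var E6 * var GB)"
  unfolding bracket_1_var_var
  by (simp add: twisted_weight_gen Sgen_def const_def var_def mult_single add_ac single_uminus del: single_numeral)

locale modular_iso =
  fixes a b c a' b' c' :: complex and \<phi> :: "J \<Rightarrow> J"
  assumes additive: "\<phi> (f + g) = \<phi> f + \<phi> g"
    and homogeneous: "\<phi> (const s * f) = const s * \<phi> f"
    and bij: "bij \<phi>"
    and maps_Jcomp: "\<phi> ` Jcomp k p \<subseteq> Jcomp k p"
    and maps_bracket: "\<phi> (bracket a b c j f g) = bracket a' b' c' j (\<phi> f) (\<phi> g)"

lemma modular_isomorphic_iff_ex_modular_iso:
  "modular_isomorphic a b c a' b' c' \<longleftrightarrow> (\<exists>\<phi>. modular_iso a b c a' b' c' \<phi>)"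
  by (simp add: modular_isomorphic_def modular_iso_def)

context modular_iso
begin

lemma map_0: "\<phi> 0 = 0"
  using additive[of 0 0] by simp

lemma map_diff: "\<phi> (f - g) = \<phi> f - \<phi> g"
  using additive[of g "f - g"] by simp

lemma map_mult: "\<phi> (f * g) = \<phi> f * \<phi> g"
  using maps_bracket[of 0 f g] by (simp add: bracket_0)

definition scale :: "gen \<Rightarrow> complex" where
  "scale v = Poly_Mapping.lookup (\<phi> (var v)) (deg1 v)"

lemma map_var: "\<phi> (var v) = const (scale v) * var v"
  unfolding scale_def
  by (rule Jcomp_deg1_eq) (use maps_Jcomp var_Jcomp in blast)

lemma scale_nonzero: "scale v \<noteq> 0"
proof
  assume "scale v = 0"
  then have "\<phi> (var v) = \<phi> 0"
    by (simp add: map_var map_0 const_0)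
  then have "var v = 0"
    using bij by (simp add: bij_is_inj inj_eq)
  then have "Poly_Mapping.lookup (var v) (deg1 v) = 0"
    by simp
  then show False
    by (simp add: var_def)
qed

lemma map_bracket_1_var:
  "\<phi> (bracket a b c 1 (var v) (var w)) = const (scale v * scale w) * bracket a' b' c' 1 (var v) (var w)"
proof -
  have "\<phi> (bracket a b c 1 (var v) (var w))
      = bracket a' b' c' 1 (const (scale v) * var v) (const (scale w) * var w)"
    by (simp add: maps_bracket map_var)
  also have "\<dots> = const (scale v * scale w) * bracket a' b' c' 1 (const 1 * var v) (const 1 * var w)"
    unfolding bracket_1_var[OF scale_nonzero scale_nonzero] bracket_1_var[OF one_neq_zero one_neq_zero]
    by (simp add: const_1)
  finally show ?thesis
    by (simp add: const_1)
qed

lemma map_var_mult_var: "\<phi> (var u * var v) = const (scale u * scale v) * (var u * var v)"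
  by (simp add: map_mult map_var const_mult ac_simps)

lemma map_var_mult_var_mult_var:
  "\<phi> (var u * var v * var w) = const (scale u * scale v * scale w) * (var u * var v * var w)"
  by (simp add: map_mult map_var const_mult ac_simps)

lemmas coefficient_simps =
  const_def var_def mult_single distrib_left right_diff_distrib
  lookup_add lookup_minus lookup_single when_def monom_eq_iff

lemma map_bracket_1_E4_E6:
  "const (scale E4 * scale E6) * (const 2 * (var E6 * var E6) - const 2 * (var E4 * var E4 * var E4))
    = const 2 * (const (scale E6 * scale E6) * (var E6 * var E6))
      - const 2 * (const (scale E4 * scale E4 * scale E4) * (var E4 * var E4 * var E4))"
  using map_bracket_1_var[of E4 E6] unfolding bracket_1_E4_E6
  by (simp add: map_diff homogeneous map_var_mult_var map_var_mult_var_mult_var)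

lemma scale_E4_E6: "scale E4 = 1" "scale E6 = 1"
proof -
  have "scale E4 * scale E6 = scale E6 * scale E6"
    using arg_cong[OF map_bracket_1_E4_E6, of "\<lambda>f. Poly_Mapping.lookup f (deg1 E6 + deg1 E6)"]
    by (simp add: coefficient_simps del: single_numeral)
  moreover have "scale E4 * scale E6 = scale E4 * scale E4 * scale E4"
    using arg_cong[OF map_bracket_1_E4_E6, of "\<lambda>f. Poly_Mapping.lookup f (deg1 E4 + deg1 E4 + deg1 E4)"]
    by (simp add: coefficient_simps del: single_numeral)
  ultimately show "scale E4 = 1" "scale E6 = 1"
    using scale_nonzero[of E4] scale_nonzero[of E6] by (auto simp: algebra_simps)
qed

lemma map_bracket_1_E4_A:
  "const (scale GA) * (const (4 * a') * (var E4 * var GB) + const ((c' - 2) / 3) * (var E6 * var GA))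
    = const (4 * a) * (const (scale GB) * (var E4 * var GB))
      + const ((c - 2) / 3) * (const (scale GA) * (var E6 * var GA))"
  using map_bracket_1_var[of E4 GA] unfolding bracket_1_E4_A
  by (simp add: additive homogeneous map_var_mult_var scale_E4_E6)

lemma scale_ratio_a: "a * scale GB = scale GA * a'"
  using arg_cong[OF map_bracket_1_E4_A, of "\<lambda>f. Poly_Mapping.lookup f (deg1 E4 + deg1 GB)"]
  by (simp add: coefficient_simps del: single_numeral)

lemma map_bracket_1_E4_B:
  "const (scale GB) * (const (4 * b') * (var E4 * var E4 * var GA) + const (c' / 3) * (var E6 * var GB))
    = const (4 * b) * (const (scale GA) * (var E4 * var E4 * var GA))
      + const (c / 3) * (const (scale GB) * (var E6 * var GB))"
  using map_bracket_1_var[of E4 GB] unfolding bracket_1_E4_B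
  by (simp add: additive homogeneous map_var_mult_var map_var_mult_var_mult_var scale_E4_E6)

lemma scale_ratio_b: "b * scale GA = scale GB * b'"
  using arg_cong[OF map_bracket_1_E4_B, of "\<lambda>f. Poly_Mapping.lookup f (deg1 E4 + deg1 E4 + deg1 GA)"]
  by (simp add: coefficient_simps del: single_numeral)

lemma twist_eq: "c = c'"
  using arg_cong[OF map_bracket_1_E4_B, of "\<lambda>f. Poly_Mapping.lookup f (deg1 E6 + deg1 GB)"]
    scale_nonzero[of GB]
  by (simp add: coefficient_simps del: single_numeral)

end

theorem mainTheorem3:
  fixes a b c a' b' c' :: complex
  assumes "modular_isomorphic a b c a' b' c'"
  shows "c = c' \<and> (\<exists>\<xi>. \<xi> \<noteq> 0 \<and> a' = \<xi> * a \<and> b' = inverse \<xi> * b)"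
proof -
  obtain \<phi> where "modular_iso a b c a' b' c' \<phi>"
    using assms modular_isomorphic_iff_ex_modular_iso by blast
  then interpret modular_iso a b c a' b' c' \<phi> .
  let ?\<xi> = "scale GB / scale GA"
  have "?\<xi> \<noteq> 0" "a' = ?\<xi> * a" "b' = inverse ?\<xi> * b"
    using scale_nonzero[of GA] scale_nonzero[of GB] scale_ratio_a scale_ratio_b
    by (auto simp: field_simps)
  then show ?thesis
    using twist_eq by blast
qed

end
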